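(* In the standing setting, for every $A'\in Q'$ we have $g'(A')=\bigcup_{a'\in A'}\downarrow f^{-1}(a')$, where $\downarrow f^{-1}(a')=\{b\in P:\ \exists a\in f^{-1}(a') \text{ with } b\preceq a\}$.
   Context: Standing setting: $(P,\preceq)$ is a finite poset with a bottom and a top element; $f:P\to P'$ is a surjective map onto $P'=f(P)$; $f^{-1}(a')=\{a\in P: f(a)=a'\}$; the relation $\preceq'$ on $P'$ is defined by $b'\preceq' a'$ iff there exist $a\in f^{-1}(a')$, $b\in f^{-1}(b')$ with $b\preceq a$. Assume the three conditions: (D) for all $a',b'\in P'$ with $b'\preceq' a'$ and every $a\in f^{-1}(a')$ there is $b\in f^{-1}(b')$ with $b\preceq a$; (U) for all $a',b'\in P'$ with $b'\preceq' a'$ and every $b\in f^{-1}(b')$ there is $a\in f^{-1}(a')$ with $b\preceq a$; (S) for all $a,b,c\in P$, if $c\preceq b\preceq a$ and $f(c)=f(a)$ then $f(b)=f(a)$. (Then $(P',\preceq')$ is a poset.) A down-set of a poset is a subset $A$ such that $a\in A$ and $b\preceq a$ imply $b\in A$. $Q$ is the set of nonempty down-sets of $(P,\preceq)$ and $Q'$ the set of nonempty down-sets of $(P',\preceq')$, each ordered by inclusion. $g:2^P\to 2^{P'}$ is $g(A)=\{f(a):a\in A\}$. For $A'\in Q'$, $g^{-1}(A')=\{A\in Q: g(A)=A'\}$ and $g'(A')=\bigcup_{A\in g^{-1}(A')}A$. *)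

theory Defs
  imports Main
begin

definition finite_bounded_poset :: "'a set \<Rightarrow> ('a \<Rightarrow> 'a \<Rightarrow> bool) \<Rightarrow> bool" where
  "finite_bounded_poset P le \<longleftrightarrow>
     finite P \<and>
     (\<forall>a\<in>P. le a a) \<and>
     (\<forall>a\<in>P. \<forall>b\<in>P. le a b \<and> le b a \<longrightarrow> a = b) \<and>
     (\<forall>a\<in>P. \<forall>b\<in>P. \<forall>c\<in>P. le a b \<and> le b c \<longrightarrow> le a c) \<and>
     (\<exists>bot\<in>P. \<forall>a\<in>P. le bot a) \<and>
     (\<exists>top\<in>P. \<forall>a\<in>P. le a top)"

definition fib :: "'a set \<Rightarrow> ('a \<Rightarrow> 'b) \<Rightarrow> 'b \<Rightarrow> 'a set" where
  "fib P f a' = {a\<in>P. f a = a'}"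

definition induced_le :: "'a set \<Rightarrow> ('a \<Rightarrow> 'a \<Rightarrow> bool) \<Rightarrow> ('a \<Rightarrow> 'b) \<Rightarrow> 'b \<Rightarrow> 'b \<Rightarrow> bool" where
  "induced_le P le f b' a' \<longleftrightarrow> (\<exists>a\<in>fib P f a'. \<exists>b\<in>fib P f b'. le b a)"

definition cond_D :: "'a set \<Rightarrow> ('a \<Rightarrow> 'a \<Rightarrow> bool) \<Rightarrow> ('a \<Rightarrow> 'b) \<Rightarrow> bool" where
  "cond_D P le f \<longleftrightarrow> (\<forall>a'\<in>f ` P. \<forall>b'\<in>f ` P. induced_le P le f b' a' \<longrightarrow>
      (\<forall>a\<in>fib P f a'. \<exists>b\<in>fib P f b'. le b a))"

definition cond_U :: "'a set \<Rightarrow> ('a \<Rightarrow> 'a \<Rightarrow> bool) \<Rightarrow> ('a \<Rightarrow> 'b) \<Rightarrow> bool" where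
  "cond_U P le f \<longleftrightarrow> (\<forall>a'\<in>f ` P. \<forall>b'\<in>f ` P. induced_le P le f b' a' \<longrightarrow>
      (\<forall>b\<in>fib P f b'. \<exists>a\<in>fib P f a'. le b a))"

definition cond_S :: "'a set \<Rightarrow> ('a \<Rightarrow> 'a \<Rightarrow> bool) \<Rightarrow> ('a \<Rightarrow> 'b) \<Rightarrow> bool" where
  "cond_S P le f \<longleftrightarrow> (\<forall>a\<in>P. \<forall>b\<in>P. \<forall>c\<in>P. le c b \<and> le b a \<and> f c = f a \<longrightarrow> f b = f a)"

definition down_set :: "'a set \<Rightarrow> ('a \<Rightarrow> 'a \<Rightarrow> bool) \<Rightarrow> 'a set \<Rightarrow> bool" where
  "down_set X r A \<longleftrightarrow> A \<subseteq> X \<and> (\<forall>a\<in>A. \<forall>b\<in>X. r b a \<longrightarrow> b \<in> A)"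

definition nonempty_down_sets :: "'a set \<Rightarrow> ('a \<Rightarrow> 'a \<Rightarrow> bool) \<Rightarrow> 'a set set" where
  "nonempty_down_sets X r = {A. down_set X r A \<and> A \<noteq> {}}"

definition g_map :: "('a \<Rightarrow> 'b) \<Rightarrow> 'a set \<Rightarrow> 'b set" where
  "g_map f A = f ` A"

definition g_inv :: "'a set \<Rightarrow> ('a \<Rightarrow> 'a \<Rightarrow> bool) \<Rightarrow> ('a \<Rightarrow> 'b) \<Rightarrow> 'b set \<Rightarrow> 'a set set" where
  "g_inv P le f A' = {A\<in>nonempty_down_sets P le. g_map f A = A'}"

definition g' :: "'a set \<Rightarrow> ('a \<Rightarrow> 'a \<Rightarrow> bool) \<Rightarrow> ('a \<Rightarrow> 'b) \<Rightarrow> 'b set \<Rightarrow> 'a set" where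
  "g' P le f A' = \<Union> (g_inv P le f A')"

definition down_closure :: "'a set \<Rightarrow> ('a \<Rightarrow> 'a \<Rightarrow> bool) \<Rightarrow> 'a set \<Rightarrow> 'a set" where
  "down_closure P le S = {b\<in>P. \<exists>a\<in>S. le b a}"

end

theory Submission
  imports Defs
begin

text \<open>The down-closure of the set of all points of P lying over A' is a nonempty down-set
  with image exactly A', and every down-set with image A' lies inside it. Hence it is the
  largest element of g\<inverse>(A'), so it equals the union g'(A').\<close>

lemma finite_bounded_poset_reflp_on: "finite_bounded_poset P le \<Longrightarrow> reflp_on P le"
  unfolding finite_bounded_poset_def reflp_on_def by blast

lemma finite_bounded_poset_transp_on: "finite_bounded_poset P le \<Longrightarrow> transp_on P le"
  unfolding finite_bounded_poset_def transp_on_def by blast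

lemma UN_down_closure_fib:
  "(\<Union>a'\<in>A'. down_closure P le (fib P f a')) = down_closure P le {a\<in>P. f a \<in> A'}"
  unfolding down_closure_def fib_def by blast

lemma subset_down_closure:
  "reflp_on P le \<Longrightarrow> S \<subseteq> P \<Longrightarrow> S \<subseteq> down_closure P le S"
  unfolding reflp_on_def down_closure_def by blast

lemma down_set_down_closure:
  "transp_on P le \<Longrightarrow> S \<subseteq> P \<Longrightarrow> down_set P le (down_closure P le S)"
  unfolding transp_on_def down_set_def down_closure_def by blast

lemma image_down_closure_vimage:
  assumes "reflp_on P le" and A': "down_set (f ` P) (induced_le P le f) A'"
  shows "f ` down_closure P le {a\<in>P. f a \<in> A'} = A'"
proof
  show "f ` down_closure P le {a\<in>P. f a \<in> A'} \<subseteq> A'"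
  proof
    fix x assume "x \<in> f ` down_closure P le {a\<in>P. f a \<in> A'}"
    then obtain a b where "a \<in> P" "f a \<in> A'" "b \<in> P" "le b a" "x = f b"
      unfolding down_closure_def by blast
    moreover from this have "induced_le P le f (f b) (f a)"
      unfolding induced_le_def fib_def by blast
    ultimately show "x \<in> A'"
      using A' unfolding down_set_def by blast
  qed
  have "A' \<subseteq> f ` {a\<in>P. f a \<in> A'}"
    using A' unfolding down_set_def by blast
  also have "\<dots> \<subseteq> f ` down_closure P le {a\<in>P. f a \<in> A'}"
    using assms(1) by (intro image_mono subset_down_closure) auto
  finally show "A' \<subseteq> f ` down_closure P le {a\<in>P. f a \<in> A'}" .
qed

theorem lemma14:
  fixes P :: "'a set" and le :: "'a \<Rightarrow> 'a \<Rightarrow> bool" and f :: "'a \<Rightarrow> 'b"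
  assumes "finite_bounded_poset P le"
    and "cond_D P le f" and "cond_U P le f" and "cond_S P le f"
    and "A' \<in> nonempty_down_sets (f ` P) (induced_le P le f)"
  shows "g' P le f A' = (\<Union>a'\<in>A'. down_closure P le (fib P f a'))"
proof -
  define D where "D = down_closure P le {a\<in>P. f a \<in> A'}"
  have refl: "reflp_on P le" and trans: "transp_on P le"
    using assms(1) by (rule finite_bounded_poset_reflp_on finite_bounded_poset_transp_on)+
  have A': "down_set (f ` P) (induced_le P le f) A'" "A' \<noteq> {}"
    using assms(5) unfolding nonempty_down_sets_def by blast+
  have "f ` D = A'"
    unfolding D_def using refl A'(1) by (rule image_down_closure_vimage)
  moreover have "down_set P le D"
    unfolding D_def using trans by (rule down_set_down_closure) blast
  ultimately have "D \<in> g_inv P le f A'"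
    using A'(2) unfolding g_inv_def nonempty_down_sets_def g_map_def by blast
  moreover have "A \<subseteq> D" if "A \<in> g_inv P le f A'" for A
  proof -
    have "A \<subseteq> {a\<in>P. f a \<in> A'}"
      using that unfolding g_inv_def nonempty_down_sets_def down_set_def g_map_def by blast
    also have "\<dots> \<subseteq> D"
      unfolding D_def using refl by (rule subset_down_closure) blast
    finally show ?thesis .
  qed
  ultimately have "g' P le f A' = D"
    unfolding g'_def by (rule cSup_eq_maximum)
  then show ?thesis
    unfolding D_def UN_down_closure_fib .
qed

end
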